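(* Let $\mathcal{S}=\{(k_1,\ldots,k_r): r\geq 1,\ k_1\geq 2,\ k_2,\ldots,k_r\geq 1 \text{ integers}\}$. Define a relation $\succ$ on $\mathcal{S}$ as follows: $(k_1,\ldots,k_r)\succ(m_1,\ldots,m_s)$ if either $(m_1,\ldots,m_s)$ is a proper initial segment of $(k_1,\ldots,k_r)$ (i.e. $s<r$ and $k_i=m_i$ for $1\leq i\leq s$), or there is $j\geq 0$ with $j<\min(r,s)$ such that $k_i=m_i$ for $1\leq i\leq j$ and $k_{j+1}<m_{j+1}$. Then for all $(k_1,\ldots,k_r),(m_1,\ldots,m_s)\in\mathcal{S}$, \[ (k_1,\ldots,k_r)\succ(m_1,\ldots,m_s)\iff \zeta^{\star}(k_1,\ldots,k_r)>\zeta^{\star}(m_1,\ldots,m_s). \]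
   Context: For integers $k_1\geq 2$ and $k_2,\ldots,k_r\geq 1$, $\zeta^{\star}(k_1,\ldots,k_r)=\sum_{n_1\geq n_2\geq\cdots\geq n_r\geq 1}\frac{1}{n_1^{k_1}\cdots n_r^{k_r}}$. (The paper defines $\succ$ as generated by the two rules "$(k_1,\ldots,k_r,k_{r+1})\succ(k_1,\ldots,k_r)$" and the lexicographic rule with reversed inequality; the description above is the resulting order.) *)

theory Defs
  imports "HOL-Analysis.Analysis"
begin

definition admissible :: "nat list \<Rightarrow> bool" where
  "admissible ks \<longleftrightarrow> ks \<noteq> [] \<and> hd ks \<ge> 2 \<and> (\<forall>k\<in>set ks. k \<ge> 1)"

definition star_tuples :: "nat \<Rightarrow> nat list set" where
  "star_tuples r = {ns. length ns = r \<and> (\<forall>i<r. ns ! i \<ge> 1) \<and>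
                        (\<forall>i. Suc i < r \<longrightarrow> ns ! i \<ge> ns ! Suc i)}"

definition zeta_star :: "nat list \<Rightarrow> real" where
  "zeta_star ks = (\<Sum>\<^sub>\<infinity> ns \<in> star_tuples (length ks).
                     \<Prod>i<length ks. 1 / real (ns ! i) ^ (ks ! i))"

definition succ_rel :: "nat list \<Rightarrow> nat list \<Rightarrow> bool" where
  "succ_rel ks ms \<longleftrightarrow>
     (length ms < length ks \<and> (\<forall>i<length ms. ks ! i = ms ! i)) \<or>
     (\<exists>j. j < min (length ks) (length ms) \<and> (\<forall>i<j. ks ! i = ms ! i) \<and> ks ! j < ms ! j)"

end

theory Submission
  imports Defs
begin

text \<open>
  Truncating the outermost summation index at \<open>N\<close> turns \<open>zeta_star k\<close> into nested finite
  sums \<open>Z\<^sub>N(k\<^sub>1,...,k\<^sub>r) = (\<Sum>n=1..N. Z\<^sub>n(k\<^sub>2,...,k\<^sub>r) / n^k\<^sub>1)\<close>, with \<open>Z\<^sub>n() = 1\<close>, which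
  increase to \<open>zeta_star k\<close>. They are bounded by \<open>2^r\<close>: for the partial sums \<open>S\<^sub>n\<close> of a
  nonnegative sequence \<open>a\<^sub>j\<close> one has \<open>\<Sum>\<^sub>n S\<^sub>n / n\<^sup>2 \<le> 2 \<Sum>\<^sub>j a\<^sub>j / j\<close>, as \<open>\<Sum>\<^sub>n\<^sub>\<ge>\<^sub>j 1 / n\<^sup>2 \<le> 2 / j\<close>.

  Every \<open>Z\<^sub>n\<close> with \<open>n \<ge> 1\<close> is at least 1, so appending entries strictly increases
  \<open>zeta_star\<close>. If \<open>k = (p, a, v)\<close> and \<open>m = (p, b, r)\<close> with \<open>a < b\<close>, the termwise estimate
  \<open>Z\<^sub>n(r, 1) / n^b \<le> n / n^b \<le> 1 / n^a\<close> gives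
  \<open>zeta_star m < zeta_star (m, 1) \<le> zeta_star (p, a) \<le> zeta_star k\<close>.
  So \<open>\<succ>\<close> implies \<open>>\<close>; the converse holds because \<open>\<succ>\<close> is total, being the converse of the
  lexicographic order on lists built from the reversed order on entries.
\<close>

lemma sum_triangle_swap:
  fixes f :: "nat \<Rightarrow> nat \<Rightarrow> 'a::comm_monoid_add"
  shows "(\<Sum>n=1..N. \<Sum>j=1..n. f n j) = (\<Sum>j=1..N. \<Sum>n=j..N. f n j)"
  by (induction N) (auto simp: sum.distrib)

lemma sum_inverse_squares_le:
  assumes "1 \<le> j"
  shows "(\<Sum>n=j..N. 1 / real n ^ 2) \<le> 2 / real j"
proof (cases "j \<le> N")
  case True
  \<comment> \<open>The extra \<open>- 1 / N\<close> lets the induction telescope: \<open>1 / (N+1)\<^sup>2 \<le> 1 / N - 1 / (N+1)\<close>.\<close>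
  then have "(\<Sum>n=j..N. 1 / real n ^ 2) \<le> 2 / real j - 1 / real N"
  proof (induction N rule: dec_induct)
    case base
    show ?case
      using assms by (simp add: power2_eq_square divide_le_eq)
  next
    case (step N)
    have "1 \<le> real N"
      using step.hyps(1) assms by simp
    then have "1 / real (Suc N) ^ 2 + 1 / real (Suc N) \<le> 1 / real N"
      by (simp add: divide_simps power2_eq_square) (simp add: algebra_simps)
    then show ?case
      using step.IH step.hyps(1) by simp
  qed
  moreover have "0 \<le> 1 / real N"
    by simp
  ultimately show ?thesis
    by linarith
qed simp

lemma sum_partial_sums_div_square_le:
  fixes a :: "nat \<Rightarrow> real"
  assumes "\<And>j. 1 \<le> j \<Longrightarrow> 0 \<le> a j"
  shows "(\<Sum>n=1..N. (\<Sum>j=1..n. a j) / real n ^ 2) \<le> 2 * (\<Sum>j=1..N. a j / real j)"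
proof -
  have "(\<Sum>n=1..N. (\<Sum>j=1..n. a j) / real n ^ 2) = (\<Sum>n=1..N. \<Sum>j=1..n. a j / real n ^ 2)"
    by (simp add: sum_divide_distrib)
  also have "\<dots> = (\<Sum>j=1..N. \<Sum>n=j..N. a j / real n ^ 2)"
    by (rule sum_triangle_swap)
  also have "\<dots> = (\<Sum>j=1..N. a j * (\<Sum>n=j..N. 1 / real n ^ 2))"
    by (simp add: sum_distrib_left)
  also have "\<dots> \<le> (\<Sum>j=1..N. a j * (2 / real j))"
  proof (rule sum_mono)
    fix j assume j: "j \<in> {1..N}"
    have "(\<Sum>n=j..N. 1 / real n ^ 2) \<le> 2 / real j"
      using sum_inverse_squares_le[of j N] j by simp
    then show "a j * (\<Sum>n=j..N. 1 / real n ^ 2) \<le> a j * (2 / real j)"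
      using assms j by (intro mult_left_mono) auto
  qed
  also have "\<dots> = 2 * (\<Sum>j=1..N. a j / real j)"
    by (simp add: sum_distrib_left mult.commute)
  finally show ?thesis .
qed

lemma tendsto_sum_exhausting_infsum:
  fixes f :: "'a \<Rightarrow> real"
  assumes nonneg: "\<And>x. x \<in> A \<Longrightarrow> 0 \<le> f x"
    and finite: "\<And>N. finite (B N)" and subset: "\<And>N. B N \<subseteq> A" and mono: "incseq B"
    and exhausting: "\<And>F. finite F \<Longrightarrow> F \<subseteq> A \<Longrightarrow> \<exists>N. F \<subseteq> B N"
    and bounded: "\<And>N. sum f (B N) \<le> C"
  shows "(\<lambda>N. sum f (B N)) \<longlonglongrightarrow> infsum f A"
proof -
  have "sum f F \<le> C" if F: "finite F" "F \<subseteq> A" for F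
  proof -
    obtain N where "F \<subseteq> B N"
      using exhausting[OF F] by blast
    then have "sum f F \<le> sum f (B N)"
      using nonneg subset finite by (intro sum_mono2) auto
    then show ?thesis
      using bounded[of N] by linarith
  qed
  then have "f summable_on A"
    using nonneg by (intro nonneg_bdd_above_summable_on bdd_aboveI) auto
  then have "(sum f \<longlongrightarrow> infsum f A) (finite_subsets_at_top A)"
    using has_sum_def has_sum_infsum by blast
  moreover have "filterlim B (finite_subsets_at_top A) sequentially"
    unfolding filterlim_finite_subsets_at_top
  proof (intro allI impI)
    fix X assume "finite X \<and> X \<subseteq> A"
    then obtain N0 where "X \<subseteq> B N0"
      using exhausting by blast
    then have "X \<subseteq> B N" if "N0 \<le> N" for N
      using mono that unfolding incseq_def by blast
    then show "eventually (\<lambda>N. finite (B N) \<and> X \<subseteq> B N \<and> B N \<subseteq> A) sequentially"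
      using finite subset unfolding eventually_sequentially by blast
  qed
  ultimately show ?thesis
    by (rule filterlim_compose)
qed

text \<open>\<open>nested_sum [k\<^sub>1,...,k\<^sub>r] g N\<close> is the sum of \<open>g n\<^sub>r / (n\<^sub>1^k\<^sub>1 \<cdots> n\<^sub>r^k\<^sub>r)\<close>
  over \<open>N \<ge> n\<^sub>1 \<ge> \<dots> \<ge> n\<^sub>r \<ge> 1\<close>.\<close>
fun nested_sum :: "nat list \<Rightarrow> (nat \<Rightarrow> real) \<Rightarrow> nat \<Rightarrow> real" where
  "nested_sum [] g N = g N"
| "nested_sum (k # ks) g N = (\<Sum>n=1..N. nested_sum ks g n / real n ^ k)"

abbreviation zeta_star_partial :: "nat list \<Rightarrow> nat \<Rightarrow> real" where
  "zeta_star_partial ks \<equiv> nested_sum ks (\<lambda>_. 1)"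

lemma nested_sum_append: "nested_sum (xs @ ys) g N = nested_sum xs (nested_sum ys g) N"
  by (induction xs arbitrary: N) auto

lemma nested_sum_diff: "nested_sum xs (\<lambda>n. g n - h n) N = nested_sum xs g N - nested_sum xs h N"
  by (induction xs arbitrary: N) (auto simp: sum_subtractf diff_divide_distrib)

lemma nested_sum_nonneg:
  assumes "\<And>n. 1 \<le> n \<Longrightarrow> 0 \<le> g n" and "1 \<le> N"
  shows "0 \<le> nested_sum xs g N"
  using assms(2) by (induction xs arbitrary: N) (auto intro!: sum_nonneg simp: assms(1))

lemma nested_sum_mono:
  assumes "\<And>n. g n \<le> h n"
  shows "nested_sum xs g N \<le> nested_sum xs h N"
  by (induction xs arbitrary: N) (auto intro!: sum_mono divide_right_mono simp: assms)

lemma nested_sum_mono_bound: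
  assumes "\<And>n. 1 \<le> n \<Longrightarrow> 0 \<le> g n" and "xs \<noteq> []" and "N \<le> M"
  shows "nested_sum xs g N \<le> nested_sum xs g M"
proof -
  obtain k ks where "xs = k # ks"
    using assms(2) by (cases xs) auto
  then show ?thesis
    using assms(1,3) by (auto intro!: sum_mono2 divide_nonneg_nonneg nested_sum_nonneg)
qed

lemma nested_sum_pos:
  assumes "\<And>n. 1 \<le> n \<Longrightarrow> 0 \<le> g n" and "0 < g N" and "1 \<le> N"
  shows "0 < nested_sum xs g N"
proof (induction xs)
  case (Cons k ks)
  then show ?case
    using assms by (auto intro!: sum_pos2[of _ N] divide_nonneg_nonneg nested_sum_nonneg)
qed (use assms in simp)

lemma zeta_star_partial_ge_one: "1 \<le> N \<Longrightarrow> 1 \<le> zeta_star_partial xs N"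
proof (induction xs arbitrary: N)
  case (Cons k ks)
  have "zeta_star_partial ks 1 / real 1 ^ k \<le> (\<Sum>n=1..N. zeta_star_partial ks n / real n ^ k)"
    using Cons.prems by (intro member_le_sum) (auto intro!: divide_nonneg_nonneg nested_sum_nonneg)
  then show ?case
    using Cons.IH[of 1] by simp
qed simp

lemma zeta_star_partial_gt_one:
  assumes "xs \<noteq> []" and "2 \<le> N"
  shows "1 < zeta_star_partial xs N"
proof -
  obtain k ks where xs: "xs = k # ks"
    using assms(1) by (cases xs) auto
  have "0 < zeta_star_partial ks N / real N ^ k"
    using zeta_star_partial_ge_one[of N ks] assms(2) by simp
  then have "1 < zeta_star_partial ks 1 + zeta_star_partial ks N / real N ^ k"
    using zeta_star_partial_ge_one[of 1 ks] by simp
  also have "\<dots> = (\<Sum>n\<in>{1, N}. zeta_star_partial ks n / real n ^ k)"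
    using assms(2) by simp
  also have "\<dots> \<le> zeta_star_partial xs N"
    unfolding xs nested_sum.simps using assms(2)
    by (intro sum_mono2) (auto intro!: divide_nonneg_nonneg nested_sum_nonneg)
  finally show ?thesis .
qed

lemma zeta_star_partial_le:
  assumes "\<forall>k\<in>set xs. 1 \<le> k" and "1 \<le> N"
  shows "zeta_star_partial xs N \<le> real N"
  using assms
proof (induction xs arbitrary: N)
  case (Cons k ks)
  have "zeta_star_partial ks n / real n ^ k \<le> 1" if "n \<in> {1..N}" for n
  proof -
    have "zeta_star_partial ks n \<le> real n"
      using Cons that by simp
    also have "\<dots> \<le> real n ^ k"
      using Cons.prems that by (simp add: self_le_power)
    finally show ?thesis
      using that by simp
  qed
  then have "zeta_star_partial (k # ks) N \<le> (\<Sum>n=1..N. 1)"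
    by (simp only: nested_sum.simps) (rule sum_mono)
  then show ?case
    by simp
qed simp

lemma zeta_star_partial_Cons_le:
  assumes "1 \<le> k"
  shows "zeta_star_partial (k # ks) N \<le> (\<Sum>n=1..N. zeta_star_partial ks n / real n)"
  unfolding nested_sum.simps
proof (rule sum_mono)
  fix n assume n: "n \<in> {1..N}"
  then have "real n \<le> real n ^ k"
    using assms by (simp add: self_le_power)
  then show "zeta_star_partial ks n / real n ^ k \<le> zeta_star_partial ks n / real n"
    using n by (intro divide_left_mono) (auto intro: nested_sum_nonneg)
qed

lemma sum_zeta_star_partial_div_square_le:
  assumes "\<forall>k\<in>set ks. 1 \<le> k"
  shows "(\<Sum>n=1..N. zeta_star_partial ks n / real n ^ 2) \<le> 2 ^ (length ks + 1)"
  using assms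
proof (induction ks arbitrary: N)
  case Nil
  show ?case
    using sum_inverse_squares_le[of 1 N] by simp
next
  case (Cons k ks)
  have "(\<Sum>n=1..N. zeta_star_partial (k # ks) n / real n ^ 2)
      \<le> (\<Sum>n=1..N. (\<Sum>j=1..n. zeta_star_partial ks j / real j) / real n ^ 2)"
    using Cons.prems by (intro sum_mono divide_right_mono zeta_star_partial_Cons_le) auto
  also have "\<dots> \<le> 2 * (\<Sum>j=1..N. zeta_star_partial ks j / real j / real j)"
    by (rule sum_partial_sums_div_square_le) (auto intro!: divide_nonneg_nonneg nested_sum_nonneg)
  also have "\<dots> = 2 * (\<Sum>j=1..N. zeta_star_partial ks j / real j ^ 2)"
    by (simp add: power2_eq_square)
  also have "\<dots> \<le> 2 * 2 ^ (length ks + 1)"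
    using Cons by simp
  finally show ?case
    by simp
qed

lemma zeta_star_partial_le_pow2:
  assumes "admissible xs"
  shows "zeta_star_partial xs N \<le> 2 ^ length xs"
proof -
  obtain k ks where xs: "xs = k # ks" and "2 \<le> k" and "\<forall>k\<in>set ks. 1 \<le> k"
    using assms unfolding admissible_def by (cases xs) auto
  have "zeta_star_partial xs N \<le> (\<Sum>n=1..N. zeta_star_partial ks n / real n ^ 2)"
    unfolding xs nested_sum.simps
  proof (rule sum_mono)
    fix n assume n: "n \<in> {1..N}"
    then have "real n ^ 2 \<le> real n ^ k"
      using \<open>2 \<le> k\<close> by (intro power_increasing) auto
    then show "zeta_star_partial ks n / real n ^ k \<le> zeta_star_partial ks n / real n ^ 2"
      using n by (intro divide_left_mono) (auto intro: nested_sum_nonneg)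
  qed
  also have "\<dots> \<le> 2 ^ length xs"
    using sum_zeta_star_partial_div_square_le \<open>\<forall>k\<in>set ks. 1 \<le> k\<close> xs by simp
  finally show ?thesis .
qed

lemma zeta_star_partial_lex_le:
  assumes "a < b" and "1 \<le> a" and "\<forall>k\<in>set ks. 1 \<le> k"
  shows "zeta_star_partial (p @ b # ks) N \<le> zeta_star_partial (p @ [a]) N"
  unfolding nested_sum_append
proof (rule nested_sum_mono)
  fix n
  show "zeta_star_partial (b # ks) n \<le> zeta_star_partial [a] n"
    unfolding nested_sum.simps
  proof (rule sum_mono)
    fix j assume j: "j \<in> {1..n}"
    have "zeta_star_partial ks j * real j ^ a \<le> real j * real j ^ a"
      using zeta_star_partial_le assms(3) j by (intro mult_right_mono) auto
    also have "\<dots> \<le> real j ^ b"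
      using assms(1) j by (simp flip: power_Suc) (intro power_increasing; simp)
    finally show "zeta_star_partial ks j / real j ^ b \<le> 1 / real j ^ a"
      using j by (simp add: divide_simps)
  qed
qed

definition star_tuples_upto :: "nat \<Rightarrow> nat \<Rightarrow> nat list set" where
  "star_tuples_upto r N = {ns \<in> star_tuples r. set ns \<subseteq> {..N}}"

definition star_term :: "nat list \<Rightarrow> nat list \<Rightarrow> real" where
  "star_term ks ns = (\<Prod>i<length ks. 1 / real (ns ! i) ^ (ks ! i))"

lemma star_term_nonneg: "0 \<le> star_term ks ns"
  unfolding star_term_def by (rule prod_nonneg) simp

lemma star_term_Cons: "star_term (k # ks) (n # ns) = star_term ks ns / real n ^ k"
  unfolding star_term_def length_Cons prod.lessThan_Suc_shift by simp

lemma star_tuples_sorted_wrt: "star_tuples r = {ns. length ns = r \<and> 0 \<notin> set ns \<and> sorted_wrt (\<ge>) ns}"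
  unfolding star_tuples_def
  by (auto simp: sorted_wrt_iff_nth_Suc_transp in_set_conv_nth Suc_le_eq)

lemma Cons_in_star_tuples_upto_iff:
  "n # ns \<in> star_tuples_upto (Suc r) N \<longleftrightarrow> n \<in> {1..N} \<and> ns \<in> star_tuples_upto r n"
  by (auto simp: star_tuples_upto_def star_tuples_sorted_wrt)

lemma finite_star_tuples_upto: "finite (star_tuples_upto r N)"
proof (rule finite_subset)
  show "star_tuples_upto r N \<subseteq> {ns. set ns \<subseteq> {..N} \<and> length ns = r}"
    unfolding star_tuples_upto_def star_tuples_def by auto
qed (simp add: finite_lists_length_eq)

lemma star_tuples_upto_0: "star_tuples_upto 0 N = {[]}"
  unfolding star_tuples_upto_def star_tuples_def by auto

lemma star_tuples_upto_Suc:
  "star_tuples_upto (Suc r) N = (\<lambda>(n, ns). n # ns) ` (SIGMA n:{1..N}. star_tuples_upto r n)"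
proof (intro equalityI subsetI)
  fix xs assume xs: "xs \<in> star_tuples_upto (Suc r) N"
  then obtain n ns where "xs = n # ns"
    by (cases xs) (auto simp: star_tuples_upto_def star_tuples_def)
  with xs show "xs \<in> (\<lambda>(n, ns). n # ns) ` (SIGMA n:{1..N}. star_tuples_upto r n)"
    by (auto simp: Cons_in_star_tuples_upto_iff)
qed (auto simp: Cons_in_star_tuples_upto_iff)

lemma zeta_star_partial_eq_sum:
  "zeta_star_partial ks N = (\<Sum>ns\<in>star_tuples_upto (length ks) N. star_term ks ns)"
proof (induction ks arbitrary: N)
  case Nil
  show ?case
    by (simp add: star_tuples_upto_0 star_term_def)
next
  case (Cons k ks)
  have inj: "inj_on (\<lambda>(n, ns). n # ns) (SIGMA n:{1..N}. star_tuples_upto (length ks) n)"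
    by (auto simp: inj_on_def)
  have "(\<Sum>ns\<in>star_tuples_upto (length (k # ks)) N. star_term (k # ks) ns)
      = (\<Sum>(n, ns)\<in>(SIGMA n:{1..N}. star_tuples_upto (length ks) n). star_term (k # ks) (n # ns))"
    unfolding length_Cons star_tuples_upto_Suc
    by (subst sum.reindex[OF inj]) (simp add: case_prod_beta o_def)
  also have "\<dots> = (\<Sum>n=1..N. \<Sum>ns\<in>star_tuples_upto (length ks) n. star_term ks ns / real n ^ k)"
    by (simp add: sum.Sigma finite_star_tuples_upto star_term_Cons)
  also have "\<dots> = zeta_star_partial (k # ks) N"
    by (simp add: Cons.IH sum_divide_distrib)
  finally show ?case ..
qed

lemma zeta_star_partial_tendsto:
  assumes "admissible ks"
  shows "zeta_star_partial ks \<longlonglongrightarrow> zeta_star ks"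
proof -
  let ?r = "length ks"
  have "(\<lambda>N. sum (star_term ks) (star_tuples_upto ?r N)) \<longlonglongrightarrow> infsum (star_term ks) (star_tuples ?r)"
  proof (rule tendsto_sum_exhausting_infsum)
    show "incseq (star_tuples_upto ?r)"
      unfolding incseq_def star_tuples_upto_def by auto
    show "\<exists>N. F \<subseteq> star_tuples_upto ?r N" if F: "finite F" "F \<subseteq> star_tuples ?r" for F
    proof -
      obtain N where "\<Union>(set ` F) \<subseteq> {..<N}"
        using finite_nat_bounded[of "\<Union>(set ` F)"] F(1) by auto
      then have "F \<subseteq> star_tuples_upto ?r N"
        using F(2) unfolding star_tuples_upto_def by auto
      then show ?thesis ..
    qed
    show "sum (star_term ks) (star_tuples_upto ?r N) \<le> 2 ^ ?r" for N
      using zeta_star_partial_le_pow2[OF assms] by (simp add: zeta_star_partial_eq_sum)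
  qed (auto simp: star_term_nonneg finite_star_tuples_upto, auto simp: star_tuples_upto_def)
  moreover have "zeta_star_partial ks = (\<lambda>N. sum (star_term ks) (star_tuples_upto ?r N))"
    using zeta_star_partial_eq_sum by blast
  moreover have "zeta_star ks = infsum (star_term ks) (star_tuples ?r)"
    unfolding zeta_star_def star_term_def ..
  ultimately show ?thesis
    by simp
qed

lemma zeta_star_mono:
  assumes "admissible ks" and "admissible ms"
    and "\<And>N. zeta_star_partial ks N \<le> zeta_star_partial ms N"
  shows "zeta_star ks \<le> zeta_star ms"
  using zeta_star_partial_tendsto[OF assms(1)] zeta_star_partial_tendsto[OF assms(2)]
  by (rule LIMSEQ_le) (use assms(3) in auto)

lemma zeta_star_append_less:
  assumes "admissible xs" and "admissible (xs @ ys)" and "ys \<noteq> []"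
  shows "zeta_star xs < zeta_star (xs @ ys)"
proof -
  define h where "h n = zeta_star_partial ys n - 1" for n
  have h_nonneg: "0 \<le> h n" if "1 \<le> n" for n
    using zeta_star_partial_ge_one[OF that] unfolding h_def by simp
  have gap: "zeta_star_partial (xs @ ys) N - zeta_star_partial xs N = nested_sum xs h N" for N
    unfolding nested_sum_append h_def nested_sum_diff by simp
  have "0 < nested_sum xs h 2"
    using h_nonneg zeta_star_partial_gt_one[OF assms(3)] by (intro nested_sum_pos) (auto simp: h_def)
  also have "nested_sum xs h 2 \<le> zeta_star (xs @ ys) - zeta_star xs"
  proof (rule LIMSEQ_le_const)
    show "(\<lambda>N. nested_sum xs h N) \<longlonglongrightarrow> zeta_star (xs @ ys) - zeta_star xs"
      unfolding gap[symmetric] by (intro tendsto_diff zeta_star_partial_tendsto assms(1,2))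
    have "xs \<noteq> []"
      using assms(1) unfolding admissible_def by simp
    then show "\<exists>N0. \<forall>N\<ge>N0. nested_sum xs h 2 \<le> nested_sum xs h N"
      using h_nonneg by (intro exI[of _ 2] allI impI nested_sum_mono_bound) auto
  qed
  finally show ?thesis
    by simp
qed

lemma zeta_star_append_le:
  assumes "admissible xs" and "admissible (xs @ ys)"
  shows "zeta_star xs \<le> zeta_star (xs @ ys)"
  using zeta_star_append_less[OF assms] by (cases "ys = []") auto

lemma succ_rel_iff_lexord: "succ_rel ks ms \<longleftrightarrow> (ms, ks) \<in> lexord {(m, k). k < m}"
  unfolding succ_rel_def lexord_take_index_conv
  by (auto simp: list_eq_iff_nth_eq min_less_iff_conj)

lemma zeta_star_less_of_lexord:
  assumes "admissible ks" and "admissible ms" and "(ms, ks) \<in> lexord {(m, k). k < m}"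
  shows "zeta_star ms < zeta_star ks"
proof -
  from assms(3) consider (extension) a v where "ks = ms @ a # v"
    | (branch) p b r a v where "a < b" and "ms = p @ b # r" and "ks = p @ a # v"
    unfolding lexord_def by blast
  then show ?thesis
  proof cases
    case extension
    then show ?thesis
      using zeta_star_append_less assms(1,2) by blast
  next
    case branch
    have "1 \<le> a" and "\<forall>k\<in>set (r @ [1]). 1 \<le> k"
      using assms(1,2) branch unfolding admissible_def by auto
    have adm_ms1: "admissible (ms @ [1])"
      using assms(2) unfolding admissible_def by (cases ms) auto
    have adm_pa: "admissible (p @ [a])"
      using assms(1) branch unfolding admissible_def by (cases p) auto
    have "zeta_star ms < zeta_star (ms @ [1])"
      by (rule zeta_star_append_less[OF assms(2) adm_ms1]) simp
    also have "\<dots> \<le> zeta_star (p @ [a])"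
    proof (rule zeta_star_mono[OF adm_ms1 adm_pa])
      show "zeta_star_partial (ms @ [1]) N \<le> zeta_star_partial (p @ [a]) N" for N
        using zeta_star_partial_lex_le[of a b "r @ [1]" p N] branch \<open>1 \<le> a\<close>
          \<open>\<forall>k\<in>set (r @ [1]). 1 \<le> k\<close> by simp
    qed
    also have "\<dots> \<le> zeta_star ks"
      using zeta_star_append_le[OF adm_pa, of v] assms(1) branch by simp
    finally show ?thesis .
  qed
qed

theorem theorem1p2:
  assumes "admissible ks" and "admissible ms"
  shows "succ_rel ks ms \<longleftrightarrow> zeta_star ks > zeta_star ms"
proof
  assume "succ_rel ks ms"
  then show "zeta_star ks > zeta_star ms"
    using zeta_star_less_of_lexord assms by (simp add: succ_rel_iff_lexord)
next
  assume less: "zeta_star ks > zeta_star ms"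
  have "(ms, ks) \<in> lexord {(m, k). k < m} \<or> ms = ks \<or> (ks, ms) \<in> lexord {(m, k). k < m}"
    by (rule lexord_linear) auto
  moreover have "(ks, ms) \<notin> lexord {(m, k). k < m}"
    using less zeta_star_less_of_lexord[OF assms(2,1)] by fastforce
  ultimately show "succ_rel ks ms"
    using less by (auto simp: succ_rel_iff_lexord)
qed

end
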